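(* Let $\mathcal{X}\subseteq\mathbb{R}^d$ be closed and convex, let $h:\mathcal{X}\to\mathbb{R}$ be strictly convex and continuously differentiable, let $\mu>0$, and let $f:\mathcal{X}\to\mathbb{R}$ be continuously differentiable with a minimizer $x^\ast$ and $\mu$-uniformly convex with respect to $h$, i.e. $D_f(x,y)\ge\mu D_h(x,y)$ for all $x,y\in\mathcal{X}$. Let $\alpha,\beta:\mathbb{R}\to\mathbb{R}$ be smooth with $\beta$ nondecreasing and $\dot\beta_t\le e^{\alpha_t}$ for all $t$. Let $t\mapsto X_t\in\mathcal{X}$ be a differentiable curve such that $Z_t:=X_t+e^{-\alpha_t}\dot X_t\in\mathcal{X}$, $t\mapsto Z_t$ and $t\mapsto\nabla h(Z_t)$ are differentiable, and $$\frac{d}{dt}\nabla h(Z_t)=\dot\beta_t\nabla h(X_t)-\dot\beta_t\nabla h(Z_t)-\frac{e^{\alpha_t}}{\mu}\nabla f(X_t).$$ Then, for $x=x^\ast$, $$\frac{d}{dt}\Big\{e^{\beta_t}\mu D_h(x,Z_t)\Big\}\le-\frac{d}{dt}\Big\{e^{\beta_t}\big(f(X_t)-f(x)\big)\Big\};$$ if moreover $\dot\beta_t=e^{\alpha_t}$ for all $t$, the inequality holds for every $x\in\mathcal{X}$. Consequently $\mathcal{E}_t=e^{\beta_t}\big(\mu D_h(x,Z_t)+f(X_t)-f(x)\big)$ is nonincreasing in $t$ for $x=x^\ast$ (and for every $x\in\mathcal{X}$ when $\dot\beta_t=e^{\alpha_t}$).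
   Context: For a differentiable function $g$, $D_g(y,x)=g(y)-g(x)-\langle\nabla g(x),y-x\rangle$ denotes its Bregman divergence. *)

theory Defs
  imports "HOL-Analysis.Analysis"
begin

definition bregman :: "('a::real_inner \<Rightarrow> real) \<Rightarrow> ('a \<Rightarrow> 'a) \<Rightarrow> 'a \<Rightarrow> 'a \<Rightarrow> real" where
  "bregman g dg y x = g y - g x - inner (dg x) (y - x)"

definition strictly_convex_on :: "'a::real_vector set \<Rightarrow> ('a \<Rightarrow> real) \<Rightarrow> bool" where
  "strictly_convex_on S f \<longleftrightarrow> convex S \<and>
    (\<forall>x\<in>S. \<forall>y\<in>S. \<forall>t. x \<noteq> y \<and> 0 < t \<and> t < 1 \<longrightarrow>
       f ((1 - t) *\<^sub>R x + t *\<^sub>R y) < (1 - t) * f x + t * f y)"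

definition C1_gradient_on :: "'a::real_inner set \<Rightarrow> ('a \<Rightarrow> real) \<Rightarrow> ('a \<Rightarrow> 'a) \<Rightarrow> bool" where
  "C1_gradient_on S f df \<longleftrightarrow>
     (\<forall>x\<in>S. (f has_derivative (\<lambda>v. inner (df x) v)) (at x within S)) \<and> continuous_on S df"

definition smooth_real :: "(real \<Rightarrow> real) \<Rightarrow> bool" where
  "smooth_real g \<longleftrightarrow> (\<forall>n x. ((deriv ^^ n) g) differentiable (at x))"

end

theory Submission
  imports Defs
begin

text \<open>
  Write \<open>E\<^sub>t = e\<^bsup>\<beta>\<^sub>t\<^esup> (\<mu> D\<^sub>h(x, Z\<^sub>t) + f(X\<^sub>t) - f(x))\<close>. Since
  \<open>d/dt D\<^sub>h(x, Z\<^sub>t) = -\<langle>d/dt \<nabla>h(Z\<^sub>t), x - Z\<^sub>t\<rangle>\<close>, substituting the ODE, regrouping with the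
  three-point identity of Bregman divergences and using \<open>dX\<^sub>t/dt = e\<^bsup>\<alpha>\<^sub>t\<^esup> (Z\<^sub>t - X\<^sub>t)\<close> gives
  \<open>e\<^bsup>-\<beta>\<^sub>t\<^esup> dE\<^sub>t/dt = (\<beta>'\<^sub>t - e\<^bsup>\<alpha>\<^sub>t\<^esup>)(\<mu> D\<^sub>h(x, X\<^sub>t) + f(X\<^sub>t) - f(x)) - \<beta>'\<^sub>t \<mu> D\<^sub>h(Z\<^sub>t, X\<^sub>t) - e\<^bsup>\<alpha>\<^sub>t\<^esup> (D\<^sub>f(x, X\<^sub>t) - \<mu> D\<^sub>h(x, X\<^sub>t))\<close>.
  The last two terms are nonpositive by convexity of \<open>h\<close> and uniform convexity of \<open>f\<close>; the first
  vanishes when \<open>\<beta>' = e\<^sup>\<alpha>\<close>, and is nonpositive for \<open>x = x\<^sup>*\<close> because \<open>\<beta>' \<le> e\<^sup>\<alpha>\<close>.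
\<close>

lemma strictly_convex_on_imp_convex_on:
  assumes "strictly_convex_on S h"
  shows "convex_on S h"
proof (rule convex_onI)
  show "convex S" using assms by (simp add: strictly_convex_on_def)
  fix t :: real and x y assume t: "0 < t" "t < 1" and xy: "x \<in> S" "y \<in> S"
  show "h ((1 - t) *\<^sub>R x + t *\<^sub>R y) \<le> (1 - t) * h x + t * h y"
  proof (cases "x = y")
    case True
    then show ?thesis by (simp add: algebra_simps flip: scaleR_add_left)
  next
    case False
    then show ?thesis using assms t xy by (auto simp: strictly_convex_on_def intro: less_imp_le)
  qed
qed

lemma bregman_nonneg:
  assumes h: "convex_on S h" and dh: "(h has_derivative inner (gh x)) (at x within S)"
    and x: "x \<in> S" and y: "y \<in> S"
  shows "0 \<le> bregman h gh y x"
proof -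
  define p where "p = (\<lambda>u::real. (1 - u) *\<^sub>R x + u *\<^sub>R y)"
  define g where "g = (\<lambda>u. h (p u))"
  have p_in: "p ` {0..1} \<subseteq> S"
    using convex_on_imp_convex[OF h] x y by (auto simp: p_def convex_alt)
  have "(p has_derivative (\<lambda>u. u *\<^sub>R (y - x))) (at 0 within {0..1})"
    unfolding p_def by (auto intro!: derivative_eq_intros simp: algebra_simps)
  moreover have "(h has_derivative inner (gh x)) (at (p 0) within p ` {0..1})"
    using dh p_in by (auto simp: p_def intro: has_derivative_subset)
  ultimately have "(g has_derivative (\<lambda>u. inner (gh x) (u *\<^sub>R (y - x)))) (at 0 within {0..1})"
    unfolding g_def using diff_chain_within by (fastforce simp: o_def)
  then have "(g has_field_derivative inner (gh x) (y - x)) (at 0 within {0..1})"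
    by (simp add: has_field_derivative_def mult.commute[of _ "inner (gh x) (y - x)"])
  then have slope_lim: "((\<lambda>u. (g u - g 0) / (u - 0)) \<longlongrightarrow> inner (gh x) (y - x)) (at 0 within {0..1})"
    by (simp add: has_field_derivative_iff)
  have "eventually (\<lambda>u. (g u - g 0) / (u - 0) \<le> h y - h x) (at 0 within {0..1})"
    unfolding eventually_at_filter
  proof (rule always_eventually, intro allI impI)
    fix u :: real assume "u \<noteq> 0" "u \<in> {0..1}"
    then have u: "0 < u" "u \<le> 1" by auto
    then have "g u \<le> (1 - u) * h x + u * h y"
      using convex_onD[OF h] x y by (simp add: g_def p_def)
    then show "(g u - g 0) / (u - 0) \<le> h y - h x"
      using u by (simp add: g_def p_def divide_simps algebra_simps)
  qed
  moreover have "at (0::real) within {0..1} \<noteq> bot"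
    by (simp add: at_within_Icc_at_right)
  ultimately have "inner (gh x) (y - x) \<le> h y - h x"
    using slope_lim tendsto_upperbound by blast
  then show ?thesis by (simp add: bregman_def)
qed

lemma bregman_three_point:
  "bregman h gh x z + bregman h gh z y - bregman h gh x y = inner (gh y - gh z) (x - z)"
  by (simp add: bregman_def inner_diff_left inner_diff_right algebra_simps)

lemma has_real_derivative_gradient_comp:
  assumes dg: "(g has_derivative inner (dg (Y t))) (at (Y t) within S)"
    and Y_in: "\<And>s. Y s \<in> S" and dY: "(Y has_vector_derivative Y') (at t)"
  shows "((\<lambda>s. g (Y s)) has_real_derivative inner (dg (Y t)) Y') (at t)"
proof -
  have "(g has_derivative inner (dg (Y t))) (at (Y t) within range Y)"
    using dg Y_in by (auto intro: has_derivative_subset)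
  then have "((\<lambda>s. g (Y s)) has_derivative (\<lambda>u. inner (dg (Y t)) (u *\<^sub>R Y'))) (at t)"
    using diff_chain_within dY by (fastforce simp: has_vector_derivative_def o_def)
  then show ?thesis
    by (simp add: has_field_derivative_def mult.commute[of _ "inner (dg (Y t)) Y'"])
qed

lemma has_real_derivative_bregman_comp:
  assumes dh: "(h has_derivative inner (gh (Z t))) (at (Z t) within S)"
    and Z_in: "\<And>s. Z s \<in> S" and dZ: "(Z has_vector_derivative Z') (at t)"
    and dG: "((\<lambda>s. gh (Z s)) has_vector_derivative G') (at t)"
  shows "((\<lambda>s. bregman h gh x (Z s)) has_real_derivative - inner G' (x - Z t)) (at t)"
proof -
  have "((\<lambda>s. inner (gh (Z s)) (x - Z s)) has_derivative
      (\<lambda>u. inner (gh (Z t)) (0 - u *\<^sub>R Z') + inner (u *\<^sub>R G') (x - Z t))) (at t)"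
    using dG dZ unfolding has_vector_derivative_def
    by (intro has_derivative_inner has_derivative_diff has_derivative_const)
  then have "((\<lambda>s. inner (gh (Z s)) (x - Z s)) has_real_derivative
      inner G' (x - Z t) - inner (gh (Z t)) Z') (at t)"
    unfolding has_field_derivative_def
    by (rule has_derivative_eq_rhs) (simp add: fun_eq_iff inner_diff_right algebra_simps)
  with has_real_derivative_gradient_comp[where g = h and dg = gh and Y = Z, OF dh Z_in dZ] show ?thesis
    unfolding bregman_def by (auto intro!: derivative_eq_intros)
qed

locale accelerated_mirror_flow =
  fixes S :: "'a::real_inner set"
    and h f :: "'a \<Rightarrow> real" and gh gf :: "'a \<Rightarrow> 'a"
    and \<mu> :: real and \<alpha> \<beta> :: "real \<Rightarrow> real" and X Z :: "real \<Rightarrow> 'a"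
  assumes h_convex: "convex_on S h"
    and h_grad: "\<And>x. x \<in> S \<Longrightarrow> (h has_derivative inner (gh x)) (at x within S)"
    and f_grad: "\<And>x. x \<in> S \<Longrightarrow> (f has_derivative inner (gf x)) (at x within S)"
    and mu_pos: "\<mu> > 0"
    and uniformly_convex: "\<And>x y. x \<in> S \<Longrightarrow> y \<in> S \<Longrightarrow> \<mu> * bregman h gh x y \<le> bregman f gf x y"
    and beta_differentiable: "\<And>t. \<beta> differentiable (at t)"
    and beta_mono: "mono \<beta>"
    and X_in: "\<And>t. X t \<in> S" and X_differentiable: "\<And>t. X differentiable (at t)"
    and Z_eq: "\<And>t. Z t = X t + exp (- \<alpha> t) *\<^sub>R vector_derivative X (at t)"
    and Z_in: "\<And>t. Z t \<in> S" and Z_differentiable: "\<And>t. Z differentiable (at t)"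
    and grad_Z_differentiable: "\<And>t. (\<lambda>s. gh (Z s)) differentiable (at t)"
    and mirror_ode: "\<And>t. vector_derivative (\<lambda>s. gh (Z s)) (at t) =
        deriv \<beta> t *\<^sub>R gh (X t) - deriv \<beta> t *\<^sub>R gh (Z t) - (exp (\<alpha> t) / \<mu>) *\<^sub>R gf (X t)"
begin

abbreviation X' :: "real \<Rightarrow> 'a" where "X' t \<equiv> vector_derivative X (at t)"
abbreviation G' :: "real \<Rightarrow> 'a" where "G' t \<equiv> vector_derivative (\<lambda>s. gh (Z s)) (at t)"

lemma beta_has_derivative: "(\<beta> has_real_derivative deriv \<beta> t) (at t)"
  using beta_differentiable by (simp add: DERIV_deriv_iff_real_differentiable)

lemma deriv_beta_nonneg: "0 \<le> deriv \<beta> t"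
  using mono_on_imp_deriv_nonneg[of UNIV \<beta>] beta_mono beta_has_derivative by auto

lemma bregman_h_nonneg: "x \<in> S \<Longrightarrow> y \<in> S \<Longrightarrow> 0 \<le> bregman h gh y x"
  by (rule bregman_nonneg[where gh = gh, OF h_convex h_grad])

lemma bregman_term_has_derivative:
  "((\<lambda>s. exp (\<beta> s) * \<mu> * bregman h gh x (Z s)) has_real_derivative
     exp (\<beta> t) * \<mu> * (deriv \<beta> t * bregman h gh x (Z t) - inner (G' t) (x - Z t))) (at t)"
proof -
  have "((\<lambda>s. bregman h gh x (Z s)) has_real_derivative - inner (G' t) (x - Z t)) (at t)"
    using Z_differentiable grad_Z_differentiable
    by (intro has_real_derivative_bregman_comp[where h = h and gh = gh and Z = Z, OF h_grad[OF Z_in] Z_in])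
      (simp_all add: vector_derivative_works)
  then show ?thesis
    by (auto intro!: derivative_eq_intros beta_has_derivative simp: algebra_simps)
qed

lemma gap_term_has_derivative:
  "((\<lambda>s. exp (\<beta> s) * (f (X s) - f x)) has_real_derivative
     exp (\<beta> t) * (deriv \<beta> t * (f (X t) - f x) + inner (gf (X t)) (X' t))) (at t)"
proof -
  have "((\<lambda>s. f (X s)) has_real_derivative inner (gf (X t)) (X' t)) (at t)"
    using X_differentiable
    by (intro has_real_derivative_gradient_comp[where g = f and dg = gf and Y = X, OF f_grad[OF X_in] X_in])
      (simp add: vector_derivative_works)
  then show ?thesis
    by (auto intro!: derivative_eq_intros beta_has_derivative simp: algebra_simps)
qed

lemma X'_eq: "X' t = exp (\<alpha> t) *\<^sub>R (Z t - X t)"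
  by (simp add: Z_eq exp_minus)

definition energy_rate :: "'a \<Rightarrow> real \<Rightarrow> real" where
  "energy_rate x t = \<mu> * (deriv \<beta> t * bregman h gh x (Z t) - inner (G' t) (x - Z t))
     + deriv \<beta> t * (f (X t) - f x) + inner (gf (X t)) (X' t)"

lemma energy_has_derivative:
  "((\<lambda>t. exp (\<beta> t) * (\<mu> * bregman h gh x (Z t) + f (X t) - f x)) has_real_derivative
     exp (\<beta> t) * energy_rate x t) (at t)"
  using DERIV_add[OF bregman_term_has_derivative gap_term_has_derivative]
  by (simp add: energy_rate_def algebra_simps)

lemma energy_rate_eq:
  "energy_rate x t
   = (deriv \<beta> t - exp (\<alpha> t)) * (\<mu> * bregman h gh x (X t) + f (X t) - f x)
     - deriv \<beta> t * \<mu> * bregman h gh (Z t) (X t)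
     - exp (\<alpha> t) * (bregman f gf x (X t) - \<mu> * bregman h gh x (X t))"
proof -
  define b a where "b = deriv \<beta> t" and "a = exp (\<alpha> t)"
  have "\<mu> * inner (G' t) (x - Z t)
      = b * \<mu> * inner (gh (X t) - gh (Z t)) (x - Z t) - a * inner (gf (X t)) (x - Z t)"
    using mu_pos by (simp add: mirror_ode b_def a_def inner_diff_left algebra_simps)
  also have "\<dots> = b * \<mu> * (bregman h gh x (Z t) + bregman h gh (Z t) (X t) - bregman h gh x (X t))
      - a * inner (gf (X t)) (x - Z t)"
    by (simp only: bregman_three_point)
  finally show ?thesis
    unfolding energy_rate_def X'_eq b_def[symmetric] a_def[symmetric]
    by (simp add: bregman_def[of f] inner_diff_right algebra_simps)
qed

lemma energy_rate_le:
  assumes "x \<in> S"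
  shows "energy_rate x t \<le> (deriv \<beta> t - exp (\<alpha> t)) * (\<mu> * bregman h gh x (X t) + f (X t) - f x)"
proof -
  have "0 \<le> deriv \<beta> t * \<mu> * bregman h gh (Z t) (X t)"
    using deriv_beta_nonneg mu_pos bregman_h_nonneg[OF X_in Z_in] by simp
  moreover have "0 \<le> exp (\<alpha> t) * (bregman f gf x (X t) - \<mu> * bregman h gh x (X t))"
    using uniformly_convex[OF assms X_in] by simp
  ultimately show ?thesis
    unfolding energy_rate_eq by linarith
qed

lemma deriv_bregman_term_le:
  assumes "x \<in> S"
    and "(deriv \<beta> t - exp (\<alpha> t)) * (\<mu> * bregman h gh x (X t) + f (X t) - f x) \<le> 0"
  shows "deriv (\<lambda>s. exp (\<beta> s) * \<mu> * bregman h gh x (Z s)) t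
    \<le> - deriv (\<lambda>s. exp (\<beta> s) * (f (X s) - f x)) t"
proof -
  have "exp (\<beta> t) * energy_rate x t \<le> 0"
    by (rule mult_nonneg_nonpos[OF exp_ge_zero order_trans[OF energy_rate_le[OF assms(1)] assms(2)]])
  then show ?thesis
    unfolding DERIV_imp_deriv[OF bregman_term_has_derivative]
      DERIV_imp_deriv[OF gap_term_has_derivative]
    by (simp add: energy_rate_def algebra_simps)
qed

lemma energy_antimono:
  assumes "x \<in> S"
    and "\<And>t. (deriv \<beta> t - exp (\<alpha> t)) * (\<mu> * bregman h gh x (X t) + f (X t) - f x) \<le> 0"
  shows "antimono (\<lambda>t. exp (\<beta> t) * (\<mu> * bregman h gh x (Z t) + f (X t) - f x))"
proof (rule antimonoI)
  fix u v :: real assume "u \<le> v"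
  have "exp (\<beta> t) * energy_rate x t \<le> 0" for t
    by (rule mult_nonneg_nonpos[OF exp_ge_zero order_trans[OF energy_rate_le[OF assms(1)] assms(2)]])
  with energy_has_derivative show "exp (\<beta> v) * (\<mu> * bregman h gh x (Z v) + f (X v) - f x)
      \<le> exp (\<beta> u) * (\<mu> * bregman h gh x (Z u) + f (X u) - f x)"
    using \<open>u \<le> v\<close> by (rule deriv_nonpos_imp_antimono)
qed

lemma energy_rate_bound_nonpos_at_minimizer:
  assumes "x \<in> S" and "\<And>y. y \<in> S \<Longrightarrow> f x \<le> f y" and "deriv \<beta> t \<le> exp (\<alpha> t)"
  shows "(deriv \<beta> t - exp (\<alpha> t)) * (\<mu> * bregman h gh x (X t) + f (X t) - f x) \<le> 0"
proof (rule mult_nonpos_nonneg)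
  show "0 \<le> \<mu> * bregman h gh x (X t) + f (X t) - f x"
    using mult_nonneg_nonneg[OF less_imp_le[OF mu_pos] bregman_h_nonneg[OF X_in[of t] assms(1)]]
      assms(2)[OF X_in[of t]] by simp
qed (use assms(3) in simp)

end

theorem proposition3:
  fixes S :: "'a::euclidean_space set"
    and h f :: "'a \<Rightarrow> real" and gh gf :: "'a \<Rightarrow> 'a"
    and \<mu> :: real and xstar :: 'a
    and \<alpha> \<beta> :: "real \<Rightarrow> real" and X :: "real \<Rightarrow> 'a"
  defines "Z \<equiv> (\<lambda>t. X t + exp (- \<alpha> t) *\<^sub>R vector_derivative X (at t))"
  assumes S: "closed S" "convex S"
    and h: "strictly_convex_on S h" "C1_gradient_on S h gh"
    and mu: "\<mu> > 0"
    and f: "C1_gradient_on S f gf"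
    and xstar: "xstar \<in> S" "\<forall>y\<in>S. f xstar \<le> f y"
    and unif: "\<forall>x\<in>S. \<forall>y\<in>S. bregman f gf x y \<ge> \<mu> * bregman h gh x y"
    and ab: "smooth_real \<alpha>" "smooth_real \<beta>" "mono \<beta>" "\<forall>t. deriv \<beta> t \<le> exp (\<alpha> t)"
    and X: "\<forall>t. X t \<in> S" "\<forall>t. X differentiable (at t)"
    and Z: "\<forall>t. Z t \<in> S" "\<forall>t. Z differentiable (at t)"
      "\<forall>t. (\<lambda>s. gh (Z s)) differentiable (at t)"
    and ode: "\<forall>t. vector_derivative (\<lambda>s. gh (Z s)) (at t) =
        deriv \<beta> t *\<^sub>R gh (X t) - deriv \<beta> t *\<^sub>R gh (Z t) - (exp (\<alpha> t) / \<mu>) *\<^sub>R gf (X t)"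
  shows "(\<forall>t. deriv (\<lambda>s. exp (\<beta> s) * \<mu> * bregman h gh xstar (Z s)) t
              \<le> - deriv (\<lambda>s. exp (\<beta> s) * (f (X s) - f xstar)) t)
    \<and> ((\<forall>t. deriv \<beta> t = exp (\<alpha> t)) \<longrightarrow>
        (\<forall>x\<in>S. \<forall>t. deriv (\<lambda>s. exp (\<beta> s) * \<mu> * bregman h gh x (Z s)) t
              \<le> - deriv (\<lambda>s. exp (\<beta> s) * (f (X s) - f x)) t))
    \<and> antimono (\<lambda>t. exp (\<beta> t) * (\<mu> * bregman h gh xstar (Z t) + f (X t) - f xstar))
    \<and> ((\<forall>t. deriv \<beta> t = exp (\<alpha> t)) \<longrightarrow>
        (\<forall>x\<in>S. antimono (\<lambda>t. exp (\<beta> t) * (\<mu> * bregman h gh x (Z t) + f (X t) - f x))))"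
proof -
  interpret accelerated_mirror_flow S h f gh gf \<mu> \<alpha> \<beta> X Z
  proof
    show "convex_on S h" using h(1) by (rule strictly_convex_on_imp_convex_on)
    show "\<And>t. \<beta> differentiable (at t)"
      using ab(2) unfolding smooth_real_def by (metis funpow_0)
  qed (use h(2) f unif ab(3) X Z ode mu in \<open>auto simp: C1_gradient_on_def Z_def\<close>)
  have at_minimizer: "(deriv \<beta> t - exp (\<alpha> t)) * (\<mu> * bregman h gh xstar (X t) + f (X t) - f xstar) \<le> 0"
    for t using energy_rate_bound_nonpos_at_minimizer xstar ab(4) by blast
  have matched: "(deriv \<beta> t - exp (\<alpha> t)) * (\<mu> * bregman h gh x (X t) + f (X t) - f x) \<le> 0"
    if "\<forall>t. deriv \<beta> t = exp (\<alpha> t)" for x t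
    using that by simp
  show ?thesis
    using deriv_bregman_term_le energy_antimono at_minimizer matched xstar(1) by blast
qed

end
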